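(* $\mathfrak{icp}(\mathsf{null}\setminus\{\emptyset\},\subseteq)=\operatorname{add}(\mathsf{null})$.
   Context: $\mathsf{null}$ is the ideal of Lebesgue measure zero subsets of $2^\omega$, here ordered by inclusion. For a poset $(P,\le)$, $F\subseteq P$ is an incomparable family if for every $p\in P$ there is $q\in F$ with $p\not\le q$ and $q\not\le p$; $\mathfrak{icp}(P)$ is the minimal size of an incomparable family. $\operatorname{add}(\mathsf{null})$ is the minimal size of a family of null sets whose union is not null. *)

theory Defs
  imports "HOL-Probability.Probability" "HOL-Library.Equipollence"
begin

text \<open>The Cantor space 2^omega is the type nat => bool; Lebesgue (coin-flipping)
  measure is the countable product of fair Bernoulli measures.\<close>

definition cantor_measure :: "(nat \<Rightarrow> bool) measure" where
  "cantor_measure = (\<Pi>\<^sub>M i\<in>(UNIV::nat set). measure_pmf (bernoulli_pmf (1/2)))"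

definition null_ideal :: "(nat \<Rightarrow> bool) set set" where
  "null_ideal = {A. \<exists>N\<in>null_sets cantor_measure. A \<subseteq> N}"

definition incomparable_family :: "('a \<Rightarrow> 'a \<Rightarrow> bool) \<Rightarrow> 'a set \<Rightarrow> 'a set \<Rightarrow> bool" where
  "incomparable_family le P F \<longleftrightarrow> F \<subseteq> P \<and>
     (\<forall>p\<in>P. \<exists>q\<in>F. \<not> le p q \<and> \<not> le q p)"

definition add_null_family :: "(nat \<Rightarrow> bool) set set \<Rightarrow> bool" where
  "add_null_family G \<longleftrightarrow> G \<subseteq> null_ideal \<and> \<Union>G \<notin> null_ideal"

end

theory Submission
  imports Defs
begin

text \<open>
  An incomparable family F in \<open>null - {{}}\<close> has non-null union: if \<open>\<Union>F\<close> were null,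
  then \<open>\<Union>F\<close> plus one further point would be a nonempty null set containing every member
  of F. Conversely, let G consist of null sets with non-null union; G is infinite, as finite
  unions of null sets are null. Cutting the members of G with the half-spaces \<open>{y. y n = b}\<close>
  gives at most \<open>|G|\<close> nonempty null pieces, and they form an incomparable family: for a
  nonempty null set p containing x, the pieces missing x cover \<open>\<Union>G - {x}\<close>, so one of
  them is not contained in p, and since it misses x it does not contain p either. Cardinals
  being well-ordered, both invariants are attained, and the two inequalities make them equal.
\<close>

unbundle cardinal_syntax

lemma exists_lepoll_minimal:
  fixes S :: "'a set set"
  assumes "S \<noteq> {}"
  shows "\<exists>A\<in>S. \<forall>B\<in>S. A \<lesssim> B"
proof -
  obtain r where r: "r \<in> card_of ` S" "\<forall>r'\<in>card_of ` S. r \<le>o r'"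
    using exists_minim_Well_order[of "card_of ` S"] assms card_of_Well_order by blast
  then obtain A where "A \<in> S" "r = |A|" by auto
  with r show ?thesis by (auto simp: lepoll_def card_of_ordLeq[symmetric])
qed

lemma minimal_families_eqpoll:
  fixes P Q :: "'a set \<Rightarrow> bool"
  assumes P_imp_Q: "\<And>F. P F \<Longrightarrow> Q F"
    and Q_imp_P: "\<And>G. Q G \<Longrightarrow> \<exists>F. P F \<and> F \<lesssim> G"
    and Q_nonempty: "Q G\<^sub>0"
  shows "\<exists>F G. P F \<and> Q G \<and> F \<approx> G \<and> (\<forall>F'. P F' \<longrightarrow> F \<lesssim> F') \<and> (\<forall>G'. Q G' \<longrightarrow> G \<lesssim> G')"
proof -
  obtain F where F: "P F" and F_min: "\<forall>F'. P F' \<longrightarrow> F \<lesssim> F'"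
    using exists_lepoll_minimal[of "Collect P"] Q_imp_P[OF Q_nonempty] by auto
  obtain G where G: "Q G" and G_min: "\<forall>G'. Q G' \<longrightarrow> G \<lesssim> G'"
    using exists_lepoll_minimal[of "Collect Q"] Q_nonempty by auto
  have "F \<lesssim> G"
    using Q_imp_P[OF G] F_min lepoll_trans by blast
  moreover have "G \<lesssim> F"
    using G_min P_imp_Q[OF F] by blast
  ultimately have "F \<approx> G"
    by (rule lepoll_antisym)
  with F G F_min G_min show ?thesis by blast
qed

lemma Times_countable_lepoll:
  assumes "infinite A" and "countable B"
  shows "A \<times> B \<lesssim> A"
proof (cases "B = {}")
  case False
  have "B \<lesssim> (UNIV :: nat set)"
    using assms(2) unfolding countable_def lepoll_def by auto
  also have "(UNIV :: nat set) \<lesssim> A"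
    using assms(1) infinite_le_lepoll by blast
  finally have "|A \<times> B| =o |A|"
    using card_of_Times_infinite_simps(1)[OF assms(1) False] by (simp add: lepoll_def card_of_ordLeq)
  then show ?thesis
    by (simp add: lepoll_def card_of_ordLeq ordIso_iff_ordLeq)
qed simp

lemma finite_Union_in_ideal:
  assumes "\<And>A B. A \<in> I \<Longrightarrow> B \<in> I \<Longrightarrow> A \<union> B \<in> I" and "{} \<in> I"
    and "finite G" and "G \<subseteq> I"
  shows "\<Union>G \<in> I"
  using assms(3,4) by (induction G rule: finite_induct) (auto intro: assms(1,2))

lemma incomparable_family_Union_notin:
  assumes Un: "\<And>A B. A \<in> I \<Longrightarrow> B \<in> I \<Longrightarrow> A \<union> B \<in> I" and singleton: "{x} \<in> I"
    and "incomparable_family (\<subseteq>) (I - {{}}) F"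
  shows "\<Union>F \<notin> I"
proof
  assume "\<Union>F \<in> I"
  then have "insert x (\<Union>F) \<in> I - {{}}"
    using Un[OF singleton] by auto
  then obtain q where "q \<in> F" "\<not> q \<subseteq> insert x (\<Union>F)"
    using assms(3) unfolding incomparable_family_def by blast
  then show False by auto
qed

lemma incomparable_family_from_Union_notin:
  fixes I S :: "'a set set"
  assumes down: "\<And>A B. A \<in> I \<Longrightarrow> B \<subseteq> A \<Longrightarrow> B \<in> I"
    and Un: "\<And>A B. A \<in> I \<Longrightarrow> B \<in> I \<Longrightarrow> A \<union> B \<in> I" and "{} \<in> I"
    and S: "countable S" and separating: "\<And>x y. x \<noteq> y \<Longrightarrow> \<exists>s\<in>S. y \<in> s \<and> x \<notin> s"
    and G: "G \<subseteq> I" and G_Union: "\<Union>G \<notin> I"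
  shows "\<exists>F. incomparable_family (\<subseteq>) (I - {{}}) F \<and> F \<lesssim> G"
proof -
  define F where "F = (\<lambda>(g, s). g \<inter> s) ` (G \<times> S) - {{}}"
  have "infinite G"
    using finite_Union_in_ideal[OF Un \<open>{} \<in> I\<close>] G G_Union by blast
  have "F \<lesssim> G \<times> S"
    unfolding F_def by (rule subset_image_lepoll) auto
  also have "G \<times> S \<lesssim> G"
    using \<open>infinite G\<close> S by (rule Times_countable_lepoll)
  finally have "F \<lesssim> G" .
  have "\<exists>q\<in>F. \<not> p \<subseteq> q \<and> \<not> q \<subseteq> p" if p: "p \<in> I - {{}}" for p
  proof -
    obtain x where x: "x \<in> p" using p by auto
    have "\<exists>g\<in>G. \<exists>s\<in>S. x \<notin> s \<and> \<not> g \<inter> s \<subseteq> p"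
    proof (rule ccontr)
      assume pieces: "\<not> ?thesis"
      have "\<Union>G \<subseteq> p"
      proof
        fix y assume "y \<in> \<Union>G"
        then obtain g where "g \<in> G" "y \<in> g" by blast
        show "y \<in> p"
        proof (cases "y = x")
          case False
          then obtain s where "s \<in> S" "y \<in> s" "x \<notin> s"
            using separating[of x y] by auto
          with \<open>g \<in> G\<close> \<open>y \<in> g\<close> pieces show ?thesis by blast
        qed (use x in simp)
      qed
      with p down G_Union show False by blast
    qed
    then obtain g s where "g \<in> G" "s \<in> S" "x \<notin> s" "\<not> g \<inter> s \<subseteq> p" by blast
    then show ?thesis
      using x unfolding F_def by (intro bexI[of _ "g \<inter> s"]) auto
  qed
  moreover have "F \<subseteq> I - {{}}"
    unfolding F_def using G down by fastforce
  ultimately show ?thesis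
    using \<open>F \<lesssim> G\<close> unfolding incomparable_family_def by blast
qed

abbreviation coin :: "nat \<Rightarrow> bool measure" where
  "coin \<equiv> \<lambda>_. measure_pmf (bernoulli_pmf (1/2))"

lemma prob_space_cantor_measure: "prob_space cantor_measure"
  unfolding cantor_measure_def by (intro prob_space_PiM) (simp add: prob_space_measure_pmf)

lemma space_cantor_measure: "space cantor_measure = UNIV"
  unfolding cantor_measure_def by (auto simp: space_PiM)

definition cylinder :: "(nat \<Rightarrow> bool) \<Rightarrow> nat \<Rightarrow> (nat \<Rightarrow> bool) set" where
  "cylinder x n = prod_emb UNIV coin {..<n} (\<Pi>\<^sub>E i\<in>{..<n}. {x i})"

lemma cylinder_sets: "cylinder x n \<in> sets cantor_measure"
  unfolding cylinder_def cantor_measure_def by (intro sets_PiM_I) auto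

lemma in_cylinder: "x \<in> cylinder x n"
  unfolding cylinder_def by (auto simp: prod_emb_def)

lemma measure_cylinder: "measure cantor_measure (cylinder x n) = (1/2) ^ n"
proof -
  interpret prob_space cantor_measure by (rule prob_space_cantor_measure)
  have "emeasure cantor_measure (cylinder x n) = (\<Prod>i<n. emeasure (coin i) {x i})"
    unfolding cylinder_def cantor_measure_def
    by (intro emeasure_PiM_emb) (auto simp: prob_space_measure_pmf)
  also have "\<dots> = (\<Prod>i<n. ennreal (1/2))"
    by (simp add: emeasure_pmf_single)
  also have "\<dots> = ennreal ((1/2) ^ n)"
    by (simp only: prod_constant card_lessThan ennreal_power)
  finally show ?thesis
    by (simp add: emeasure_eq_measure)
qed

lemma singleton_in_null_ideal: "{x} \<in> null_ideal"
proof -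
  interpret prob_space cantor_measure by (rule prob_space_cantor_measure)
  define N where "N = (\<Inter>n. cylinder x n)"
  have N_sets: "N \<in> sets cantor_measure"
    unfolding N_def using cylinder_sets by auto
  have "measure cantor_measure N \<le> (1/2) ^ n" for n
    using finite_measure_mono[of N "cylinder x n"] cylinder_sets measure_cylinder
    unfolding N_def by auto
  moreover have "(\<lambda>n. (1/2::real) ^ n) \<longlonglongrightarrow> 0"
    by (intro LIMSEQ_power_zero) auto
  ultimately have "measure cantor_measure N \<le> 0"
    by (intro LIMSEQ_le_const) auto
  then have "N \<in> null_sets cantor_measure"
    using N_sets by (simp add: emeasure_eq_measure null_sets_def antisym)
  moreover have "{x} \<subseteq> N"
    by (auto simp: N_def in_cylinder)
  ultimately show ?thesis
    unfolding null_ideal_def by auto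
qed

lemma UNIV_notin_null_ideal: "UNIV \<notin> null_ideal"
proof
  interpret prob_space cantor_measure by (rule prob_space_cantor_measure)
  assume "UNIV \<in> null_ideal"
  then obtain N where "N \<in> null_sets cantor_measure" "UNIV \<subseteq> N"
    unfolding null_ideal_def by auto
  then have "space cantor_measure \<in> null_sets cantor_measure"
    by (simp add: space_cantor_measure top.extremum_unique)
  then show False
    using emeasure_space_1 null_setsD1 by fastforce
qed

lemma null_ideal_subset: "A \<in> null_ideal \<Longrightarrow> B \<subseteq> A \<Longrightarrow> B \<in> null_ideal"
  unfolding null_ideal_def by blast

lemma null_ideal_Un: "A \<in> null_ideal \<Longrightarrow> B \<in> null_ideal \<Longrightarrow> A \<union> B \<in> null_ideal"
  unfolding null_ideal_def by (blast intro: null_sets.Un)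

lemma empty_in_null_ideal: "{} \<in> null_ideal"
  unfolding null_ideal_def by blast

lemma half_spaces_separating:
  "x \<noteq> y \<Longrightarrow> \<exists>s\<in>range (\<lambda>(n, b). {z :: nat \<Rightarrow> bool. z n = b}). y \<in> s \<and> x \<notin> s"
proof -
  assume "x \<noteq> y"
  then obtain n where "x n \<noteq> y n" by auto
  then show ?thesis
    by (intro bexI[of _ "{z. z n = y n}"]) auto
qed

theorem mainTheorem10:
  shows "\<exists>F G.
     incomparable_family (\<subseteq>) (null_ideal - {{}}) F \<and> add_null_family G \<and>
     F \<approx> G \<and>
     (\<forall>F'. incomparable_family (\<subseteq>) (null_ideal - {{}}) F' \<longrightarrow> F \<lesssim> F') \<and>
     (\<forall>G'. add_null_family G' \<longrightarrow> G \<lesssim> G')"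
proof (rule minimal_families_eqpoll)
  show "add_null_family F" if "incomparable_family (\<subseteq>) (null_ideal - {{}}) F" for F
    using that incomparable_family_Union_notin[OF null_ideal_Un singleton_in_null_ideal]
    unfolding add_null_family_def incomparable_family_def by auto
  show "\<exists>F. incomparable_family (\<subseteq>) (null_ideal - {{}}) F \<and> F \<lesssim> G"
    if "add_null_family G" for G
    using that incomparable_family_from_Union_notin[OF null_ideal_subset null_ideal_Un
        empty_in_null_ideal _ half_spaces_separating]
    unfolding add_null_family_def by auto
  show "add_null_family (range (\<lambda>x. {x}))"
    unfolding add_null_family_def using singleton_in_null_ideal UNIV_notin_null_ideal by auto
qed

end
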